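(* Let $\mu \in \mathbb{R}$, $\sigma_u^2 > 0$ and $V > 0$ be fixed, and let $F(\cdot, V)$ be the function of $b \in \mathbb{R}$ defined by \[ F(b,V) = \begin{cases} \displaystyle\int_{\mu}^\infty \Big[1 - \Phi \Big( \frac{- b(u - \mu)}{\sqrt{V - b^2 \sigma_u^2}}\Big) \Big] p(u)\, du, & - \sqrt{V/\sigma_u^2} < b < \sqrt{V/\sigma_u^2}, \\[2mm] \int_{\mu}^\infty p(u)\, du = \tfrac{1}{2}, & b \geq \sqrt{V/\sigma_u^2}, \\[1mm] 0, & b \leq - \sqrt{V/\sigma_u^2}. \end{cases} \] Then $b \mapsto F(b,V)$ is strictly monotonically increasing on the open interval $\left(- \sqrt{V/\sigma_u^2},\ \sqrt{V/\sigma_u^2}\right)$.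
   Context: $\Phi(x) = \int_{-\infty}^x \frac{1}{\sqrt{2\pi}} e^{-s^2/2}\, ds$ is the standard normal cumulative distribution function, and $p(u) = \frac{1}{\sqrt{2\pi\sigma_u^2}} \exp\!\left(-\frac{(u-\mu)^2}{2\sigma_u^2}\right)$ is the density of a $\mathcal{N}(\mu,\sigma_u^2)$ random variable. *)

theory Defs
  imports "HOL-Probability.Probability"
begin

definition Phi :: "real \<Rightarrow> real" where
  "Phi x = (LINT s:{..x}|lborel. exp (- s\<^sup>2 / 2) / sqrt (2 * pi))"

definition pdens :: "real \<Rightarrow> real \<Rightarrow> real \<Rightarrow> real" where
  "pdens \<mu> \<sigma>2 u = exp (- (u - \<mu>)\<^sup>2 / (2 * \<sigma>2)) / sqrt (2 * pi * \<sigma>2)"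

definition F :: "real \<Rightarrow> real \<Rightarrow> real \<Rightarrow> real \<Rightarrow> real" where
  "F \<mu> \<sigma>2 V b =
     (if - sqrt (V / \<sigma>2) < b \<and> b < sqrt (V / \<sigma>2) then
        (LINT u:{\<mu>..}|lborel. (1 - Phi (- b * (u - \<mu>) / sqrt (V - b\<^sup>2 * \<sigma>2))) * pdens \<mu> \<sigma>2 u)
      else if b \<ge> sqrt (V / \<sigma>2) then (LINT u:{\<mu>..}|lborel. pdens \<mu> \<sigma>2 u)
      else 0)"

end

theory Submission
  imports Defs
begin

(* With s(b) = b / sqrt (V - b^2 sigma_u^2), which is strictly increasing on the interval, the
   integrand of F(b, V) is (1 - Phi (-(u - mu) s(b))) p(u). As Phi is strictly increasing, the
   integrand is nondecreasing in b for u >= mu and strictly increasing for u > mu; since p > 0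
   and {u > mu} has positive measure, the integral increases strictly. *)

lemma integral_strict_mono_AE:
  fixes f g :: "'a \<Rightarrow> real"
  assumes f: "integrable M f" and g: "integrable M g"
    and le: "AE x in M. f x \<le> g x"
    and A: "A \<in> sets M" "emeasure M A \<noteq> 0" and less: "\<And>x. x \<in> A \<Longrightarrow> f x < g x"
  shows "integral\<^sup>L M f < integral\<^sup>L M g"
proof -
  have "integral\<^sup>L M f \<le> integral\<^sup>L M g"
    using f g le by (rule integral_mono_AE)
  moreover have "integral\<^sup>L M (\<lambda>x. g x - f x) \<noteq> 0"
  proof
    assume "integral\<^sup>L M (\<lambda>x. g x - f x) = 0"
    then have "AE x in M. g x - f x = 0"
      using integral_nonneg_eq_0_iff_AE[of M "\<lambda>x. g x - f x"] f g le by auto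
    then have "AE x in M. x \<notin> A"
      by eventually_elim (use less in force)
    moreover have "{x \<in> space M. \<not> x \<notin> A} = A"
      using sets.sets_into_space[OF A(1)] by auto
    ultimately show False
      using A AE_iff_measurable[of A M "\<lambda>x. x \<notin> A"] by simp
  qed
  ultimately show ?thesis
    using f g by simp
qed

lemma set_integral_strict_mono:
  fixes f g :: "'a \<Rightarrow> real"
  assumes f: "set_integrable M S f" and g: "set_integrable M S g"
    and le: "\<And>x. x \<in> S \<Longrightarrow> f x \<le> g x"
    and A: "A \<subseteq> S" "A \<in> sets M" "emeasure M A \<noteq> 0" and less: "\<And>x. x \<in> A \<Longrightarrow> f x < g x"
  shows "(LINT x:S|M. f x) < (LINT x:S|M. g x)"
  unfolding set_lebesgue_integral_def
proof (rule integral_strict_mono_AE[where A = A])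
  show "\<And>x. x \<in> A \<Longrightarrow> indicator S x *\<^sub>R f x < indicator S x *\<^sub>R g x"
    using A less by auto
qed (use f g le A in \<open>auto simp: set_integrable_def indicator_def\<close>)

lemma Phi_eq_integral: "Phi x = (\<integral>s. indicator {..x} s * std_normal_density s \<partial>lborel)"
  unfolding Phi_def set_lebesgue_integral_def std_normal_density_def by simp

lemma integrable_indicator_std_normal_density:
  "A \<in> sets borel \<Longrightarrow> integrable lborel (\<lambda>s. indicator A s * std_normal_density s)"
  using integrable_mult_indicator[of A lborel std_normal_density] by simp

lemma strict_mono_Phi: "strict_mono Phi"
proof (rule strict_monoI)
  fix x y :: real
  assume "x < y"
  then show "Phi x < Phi y"
    unfolding Phi_eq_integral
    by (intro integral_strict_mono_AE[where A = "{x<..<y}"]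
        integrable_indicator_std_normal_density)
      (auto simp: indicator_def normal_density_pos)
qed

lemma borel_measurable_Phi [measurable]: "Phi \<in> borel_measurable borel"
  using strict_mono_Phi by (intro borel_measurable_mono strict_mono_mono)

lemma Phi_nonneg: "0 \<le> Phi x"
  unfolding Phi_eq_integral by (auto intro!: integral_nonneg_AE)

lemma Phi_le_1: "Phi x \<le> 1"
proof -
  have "Phi x \<le> (\<integral>s. std_normal_density s \<partial>lborel)"
    unfolding Phi_eq_integral
    by (intro integral_mono integrable_indicator_std_normal_density) (auto simp: indicator_def)
  then show ?thesis
    by simp
qed

lemma pdens_eq_normal_density: "\<sigma>2 > 0 \<Longrightarrow> pdens \<mu> \<sigma>2 = normal_density \<mu> (sqrt \<sigma>2)"
  by (simp add: fun_eq_iff pdens_def normal_density_def)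

lemma set_integrable_one_minus_Phi_pdens:
  assumes "\<sigma>2 > 0" and [measurable]: "g \<in> borel_measurable borel" and [measurable]: "S \<in> sets borel"
  shows "set_integrable lborel S (\<lambda>u. (1 - Phi (g u)) * pdens \<mu> \<sigma>2 u)"
  unfolding pdens_eq_normal_density[OF assms(1)]
proof (rule set_integrable_bound[where f = "normal_density \<mu> (sqrt \<sigma>2)"])
  show "set_integrable lborel S (normal_density \<mu> (sqrt \<sigma>2))"
    using assms(1,3) integrable_mult_indicator[of S lborel "normal_density \<mu> (sqrt \<sigma>2)"]
    by (simp add: set_integrable_def)
  show "AE x in lborel. x \<in> S \<longrightarrow>
      norm ((1 - Phi (g x)) * normal_density \<mu> (sqrt \<sigma>2) x) \<le> norm (normal_density \<mu> (sqrt \<sigma>2) x)"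
    using Phi_nonneg Phi_le_1 by (auto simp: abs_mult intro!: mult_left_le_one_le)
qed (simp add: set_borel_measurable_def)

lemma greaterThanLessThan_sqrt_div_eq:
  fixes c V :: real
  assumes "0 < c"
  shows "{- sqrt (V / c) <..< sqrt (V / c)} = {b. b\<^sup>2 * c < V}"
proof (rule set_eqI)
  fix b
  have "b \<in> {- sqrt (V / c) <..< sqrt (V / c)} \<longleftrightarrow> \<bar>b\<bar> < sqrt (V / c)"
    by (auto simp: abs_less_iff)
  also have "\<dots> \<longleftrightarrow> sqrt (b\<^sup>2) < sqrt (V / c)"
    by (simp only: real_sqrt_abs)
  also have "\<dots> \<longleftrightarrow> b\<^sup>2 * c < V"
    using assms by (simp only: real_sqrt_less_iff pos_less_divide_eq)
  finally show "b \<in> {- sqrt (V / c) <..< sqrt (V / c)} \<longleftrightarrow> b \<in> {b. b\<^sup>2 * c < V}"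
    by simp
qed

lemma strict_mono_on_div_sqrt:
  fixes s V :: real
  assumes "0 \<le> s"
  shows "strict_mono_on {b. b\<^sup>2 * s < V} (\<lambda>b. b / sqrt (V - b\<^sup>2 * s))"
proof (rule strict_mono_onI)
  have nonneg_case: "x / sqrt (V - x\<^sup>2 * s) < y / sqrt (V - y\<^sup>2 * s)"
    if "0 \<le> x" "x < y" "y\<^sup>2 * s < V" for x y :: real
  proof -
    have "x\<^sup>2 \<le> y\<^sup>2"
      using that by (simp add: power_mono)
    then have "x\<^sup>2 * s \<le> y\<^sup>2 * s"
      using assms by (rule mult_right_mono)
    then have le: "sqrt (V - y\<^sup>2 * s) \<le> sqrt (V - x\<^sup>2 * s)"
      by simp
    have pos: "0 < sqrt (V - y\<^sup>2 * s)"
      using that by simp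
    with le have "0 < sqrt (V - x\<^sup>2 * s) * sqrt (V - y\<^sup>2 * s)"
      by simp
    with le that(1) have "x / sqrt (V - x\<^sup>2 * s) \<le> x / sqrt (V - y\<^sup>2 * s)"
      by (rule divide_left_mono)
    also have "\<dots> < y / sqrt (V - y\<^sup>2 * s)"
      using that pos by (simp add: divide_strict_right_mono)
    finally show ?thesis .
  qed
  fix b1 b2 :: real
  assume b: "b1 \<in> {b. b\<^sup>2 * s < V}" "b2 \<in> {b. b\<^sup>2 * s < V}" "b1 < b2"
  consider "0 \<le> b1" | "b2 \<le> 0" | "b1 < 0" "0 < b2"
    by linarith
  then show "b1 / sqrt (V - b1\<^sup>2 * s) < b2 / sqrt (V - b2\<^sup>2 * s)"
  proof cases
    case 1
    then show ?thesis
      using b by (intro nonneg_case) auto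
  next
    case 2
    then have "- b2 / sqrt (V - (- b2)\<^sup>2 * s) < - b1 / sqrt (V - (- b1)\<^sup>2 * s)"
      using b by (intro nonneg_case) auto
    then show ?thesis
      by simp
  next
    case 3
    with b have "b1 / sqrt (V - b1\<^sup>2 * s) < 0" "0 < b2 / sqrt (V - b2\<^sup>2 * s)"
      by (auto intro: divide_neg_pos divide_pos_pos)
    then show ?thesis
      by linarith
  qed
qed

lemma Phi_neg_mult_antimono:
  assumes "0 \<le> t" "k1 \<le> k2"
  shows "Phi (- (t * k2)) \<le> Phi (- (t * k1))"
  using assms strict_mono_Phi[THEN strict_mono_mono] by (simp add: monoD mult_left_mono)

lemma Phi_neg_mult_strict_antimono:
  assumes "0 < t" "k1 < k2"
  shows "Phi (- (t * k2)) < Phi (- (t * k1))"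
  using assms strict_mono_Phi by (simp add: strict_monoD)

theorem lemma1:
  fixes \<mu> \<sigma>2 V :: real
  assumes "\<sigma>2 > 0" and "V > 0"
  shows "strict_mono_on {- sqrt (V / \<sigma>2) <..< sqrt (V / \<sigma>2)} (F \<mu> \<sigma>2 V)"
proof -
  define slope where "slope b = b / sqrt (V - b\<^sup>2 * \<sigma>2)" for b
  define integrand where "integrand b u = (1 - Phi (- ((u - \<mu>) * slope b))) * pdens \<mu> \<sigma>2 u" for b u
  have interval: "{- sqrt (V / \<sigma>2) <..< sqrt (V / \<sigma>2)} = {b. b\<^sup>2 * \<sigma>2 < V}"
    using assms(1) by (rule greaterThanLessThan_sqrt_div_eq)
  have F_eq: "F \<mu> \<sigma>2 V b = (LINT u:{\<mu>..}|lborel. integrand b u)"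
    if "b \<in> {- sqrt (V / \<sigma>2) <..< sqrt (V / \<sigma>2)}" for b
    using that by (simp add: F_def integrand_def slope_def mult.commute)
  have integrable: "set_integrable lborel {\<mu>..} (integrand b)" for b
    unfolding integrand_def using assms(1) by (intro set_integrable_one_minus_Phi_pdens) auto
  have pdens_pos: "0 < pdens \<mu> \<sigma>2 u" for u
    using assms(1) by (simp add: pdens_eq_normal_density normal_density_pos)
  have slope_mono: "strict_mono_on {b. b\<^sup>2 * \<sigma>2 < V} slope"
    unfolding slope_def using assms(1) by (simp add: strict_mono_on_div_sqrt)
  show ?thesis
    unfolding interval
  proof (rule strict_mono_onI)
    fix b1 b2
    assume b: "b1 \<in> {b. b\<^sup>2 * \<sigma>2 < V}" "b2 \<in> {b. b\<^sup>2 * \<sigma>2 < V}" "b1 < b2"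
    then have "slope b1 < slope b2"
      by (rule strict_mono_onD[OF slope_mono])
    then have "(LINT u:{\<mu>..}|lborel. integrand b1 u) < (LINT u:{\<mu>..}|lborel. integrand b2 u)"
      using pdens_pos
      by (intro set_integral_strict_mono[where A = "{\<mu><..<\<mu> + 1}"] integrable)
        (auto simp: integrand_def intro!: mult_right_mono mult_strict_right_mono
          Phi_neg_mult_antimono Phi_neg_mult_strict_antimono)
    with b show "F \<mu> \<sigma>2 V b1 < F \<mu> \<sigma>2 V b2"
      by (simp add: F_eq interval)
  qed
qed

end
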